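(* Let $u\in\mathcal{B}^N$, $m\in\mathbb{R}$, $(r,\sigma)\in F(N,A,u,m)$, and let $\mu$ be a minimum weight perfect matching in $\mathcal{F}^u_\kappa(r)$. Then there is $\varepsilon>0$ such that for each $\delta\in(0,\varepsilon]$ there is $(r^\delta,\mu)\in F(N,A,u,m+\delta)$ with $r^\delta_a>r_a$ for each $a\in A$.
   Context: Fix a finite set $\{\rho_1,\dots,\rho_k\}\subseteq\mathbb{R}_+$ with $\rho_1=0$. $N=\{1,\dots,n\}$ agents, $A$ a set of $n$ rooms. $\mathcal{B}$ is the set of utility functions $u_i(r_a,a)=v^i_a-r_a-\rho_i\max\{0,r_a-b_i\}$ with $v^i\in\mathbb{R}^A$, $b_i\ge0$, $\rho_i\in\{\rho_1,\dots,\rho_k\}$. An allocation for $(N,A,u,m)$ is $(r,\sigma)$ with $\sigma:N\to A$ a bijection, $r\in\mathbb{R}^A$, $\sum_ar_a=m$; envy-free means $u_i(r_{\sigma(i)},\sigma(i))\ge u_i(r_{\sigma(j)},\sigma(j))$ for all $i,j$; $F(N,A,u,m)$ is the set of envy-free allocations. $\kappa_{ia}(u,r)$ is the absolute value of agent $i$'s marginal disutility of an increase of the rent of room $a$ at $r$, i.e. $\kappa_{ia}(u,r)=1+\rho_i$ if $r_a\ge b_i$ and $1$ otherwise. For $r$ with some envy-free $(r,\sigma)$, $\mathcal{F}(r)$ is the bipartite graph on $N\cup A$ with edge $(i,a)$ iff $u_i(r_{\sigma(i)},\sigma(i))=u_i(r_a,a)$, and $\mathcal{F}^u_\kappa(r)$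 is this graph with weights $w(i,a)=\log\kappa_{ia}(u,r)$; a minimum weight perfect matching is a bijection $\mu:N\to A$ using only edges of $\mathcal{F}(r)$ minimizing $\sum_iw(i,\mu(i))$ among such. *)

theory Defs
  imports "HOL-Analysis.Analysis"
begin

text \<open>Utility in class B: u_i(x,a) = v i a - x - rho i * max 0 (x - b i).
  Agents of type 'i, rooms of type 'a; a profile is given by (v, b, rho).\<close>

definition util :: "('i \<Rightarrow> 'a \<Rightarrow> real) \<Rightarrow> ('i \<Rightarrow> real) \<Rightarrow> ('i \<Rightarrow> real) \<Rightarrow> 'i \<Rightarrow> real \<Rightarrow> 'a \<Rightarrow> real" where
  "util v b rho i x a = v i a - x - rho i * max 0 (x - b i)"

definition in_B :: "real set \<Rightarrow> 'i set \<Rightarrow> ('i \<Rightarrow> real) \<Rightarrow> ('i \<Rightarrow> real) \<Rightarrow> bool" where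
  "in_B Rhos N b rho \<longleftrightarrow> (\<forall>i\<in>N. b i \<ge> 0 \<and> rho i \<in> Rhos)"

definition allocation :: "'i set \<Rightarrow> 'a set \<Rightarrow> real \<Rightarrow> ('a \<Rightarrow> real) \<Rightarrow> ('i \<Rightarrow> 'a) \<Rightarrow> bool" where
  "allocation N A m r \<sigma> \<longleftrightarrow> bij_betw \<sigma> N A \<and> (\<Sum>a\<in>A. r a) = m"

definition envy_free :: "('i \<Rightarrow> 'a \<Rightarrow> real) \<Rightarrow> ('i \<Rightarrow> real) \<Rightarrow> ('i \<Rightarrow> real) \<Rightarrow>
    'i set \<Rightarrow> 'a set \<Rightarrow> real \<Rightarrow> ('a \<Rightarrow> real) \<Rightarrow> ('i \<Rightarrow> 'a) \<Rightarrow> bool" where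
  "envy_free v b rho N A m r \<sigma> \<longleftrightarrow> allocation N A m r \<sigma> \<and>
     (\<forall>i\<in>N. \<forall>j\<in>N. util v b rho i (r (\<sigma> i)) (\<sigma> i) \<ge> util v b rho i (r (\<sigma> j)) (\<sigma> j))"

text \<open>kappa_{ia}(u,r): absolute marginal disutility of raising the rent of room a.\<close>
definition kappa :: "('i \<Rightarrow> real) \<Rightarrow> ('i \<Rightarrow> real) \<Rightarrow> 'i \<Rightarrow> 'a \<Rightarrow> ('a \<Rightarrow> real) \<Rightarrow> real" where
  "kappa b rho i a r = (if r a \<ge> b i then 1 + rho i else 1)"

definition F_edge :: "('i \<Rightarrow> 'a \<Rightarrow> real) \<Rightarrow> ('i \<Rightarrow> real) \<Rightarrow> ('i \<Rightarrow> real) \<Rightarrow>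
    ('a \<Rightarrow> real) \<Rightarrow> ('i \<Rightarrow> 'a) \<Rightarrow> 'i \<Rightarrow> 'a \<Rightarrow> bool" where
  "F_edge v b rho r \<sigma> i a \<longleftrightarrow> util v b rho i (r (\<sigma> i)) (\<sigma> i) = util v b rho i (r a) a"

definition perfect_matching_F :: "('i \<Rightarrow> 'a \<Rightarrow> real) \<Rightarrow> ('i \<Rightarrow> real) \<Rightarrow> ('i \<Rightarrow> real) \<Rightarrow>
    'i set \<Rightarrow> 'a set \<Rightarrow> ('a \<Rightarrow> real) \<Rightarrow> ('i \<Rightarrow> 'a) \<Rightarrow> ('i \<Rightarrow> 'a) \<Rightarrow> bool" where
  "perfect_matching_F v b rho N A r \<sigma> \<mu> \<longleftrightarrow>
     bij_betw \<mu> N A \<and> (\<forall>i\<in>N. F_edge v b rho r \<sigma> i (\<mu> i))"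

definition match_weight :: "('i \<Rightarrow> real) \<Rightarrow> ('i \<Rightarrow> real) \<Rightarrow> 'i set \<Rightarrow> ('a \<Rightarrow> real) \<Rightarrow> ('i \<Rightarrow> 'a) \<Rightarrow> real" where
  "match_weight b rho N r \<mu> = (\<Sum>i\<in>N. ln (kappa b rho i (\<mu> i) r))"

definition min_weight_pm :: "('i \<Rightarrow> 'a \<Rightarrow> real) \<Rightarrow> ('i \<Rightarrow> real) \<Rightarrow> ('i \<Rightarrow> real) \<Rightarrow>
    'i set \<Rightarrow> 'a set \<Rightarrow> ('a \<Rightarrow> real) \<Rightarrow> ('i \<Rightarrow> 'a) \<Rightarrow> ('i \<Rightarrow> 'a) \<Rightarrow> bool" where
  "min_weight_pm v b rho N A r \<sigma> \<mu> \<longleftrightarrow> perfect_matching_F v b rho N A r \<sigma> \<mu> \<and>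
     (\<forall>\<mu>'. perfect_matching_F v b rho N A r \<sigma> \<mu>' \<longrightarrow>
        match_weight b rho N r \<mu> \<le> match_weight b rho N r \<mu>')"

end

theory Submission
  imports Defs "HOL-Combinatorics.Cycles"
begin

(* Put an arc x -> y between rooms when the agent holding x under mu is indifferent (at r) between
   x and y, weighted ln kappa(owner, y) - ln kappa(owner, x). Rotating mu along a cycle of arcs gives
   another perfect matching of F(r), so minimality of mu means there is no negative cycle, hence a
   potential p with ln kappa_{i,mu i} + p (mu i) <= ln kappa_{ia} + p a on every edge (i, a).
   Raising all rents at rates d = exp p (normalised to sum 1) then makes every agent lose utility on
   mu i at most as fast as on any room it was indifferent to, while rooms it strictly disliked stay
   worse for small raises. *)

lemma util_raise_le_kappa:
  assumes "rho i \<ge> 0" "h \<ge> 0"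
  shows "util v b rho i (r a + h) a \<le> util v b rho i (r a) a - kappa b rho i a r * h"
proof (cases "r a \<ge> b i")
  case False
  have "rho i * max 0 (r a + h - b i) \<ge> 0" using assms by simp
  then show ?thesis using False by (simp add: util_def kappa_def max_def)
qed (use assms in \<open>simp add: util_def kappa_def max_def algebra_simps\<close>)

lemma util_raise_ge:
  assumes "rho i \<ge> 0" "h \<ge> 0"
  shows "util v b rho i (x + h) a \<ge> util v b rho i x a - (1 + rho i) * h"
proof -
  have "max 0 (x + h - b i) \<le> max 0 (x - b i) + h" using assms by (simp add: max_def)
  then have "rho i * max 0 (x + h - b i) \<le> rho i * (max 0 (x - b i) + h)"
    using assms by (intro mult_left_mono) auto
  then show ?thesis by (simp add: util_def algebra_simps)
qed

lemma util_raise_eq_kappa: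
  assumes "h \<ge> 0" "r a < b i \<Longrightarrow> r a + h \<le> b i"
  shows "util v b rho i (r a + h) a = util v b rho i (r a) a - kappa b rho i a r * h"
  using assms by (cases "r a \<ge> b i") (auto simp: util_def kappa_def max_def algebra_simps)

fun walk_weight :: "('a \<Rightarrow> 'a \<Rightarrow> real) \<Rightarrow> 'a list \<Rightarrow> real" where
  "walk_weight W (x # y # zs) = W x y + walk_weight W (y # zs)"
| "walk_weight W _ = 0"

lemma walk_weight_append:
  "walk_weight W (xs @ y # ys) = walk_weight W (xs @ [y]) + walk_weight W (y # ys)"
  by (induction xs rule: induct_list012) auto

lemma walk_weight_conv_zip: "walk_weight W xs = (\<Sum>(x, y)\<leftarrow>zip xs (tl xs). W x y)"
  by (induction xs rule: induct_list012) auto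

lemma successively_conv_zip: "successively P xs \<longleftrightarrow> (\<forall>(x, y)\<in>set (zip xs (tl xs)). P x y)"
  by (induction xs rule: induct_list012) auto

lemma zip_closed_walk_cycle_of_list:
  assumes "distinct cs" "cs \<noteq> []"
  shows "zip (cs @ [hd cs]) (tl (cs @ [hd cs])) = map (\<lambda>x. (x, cycle_of_list cs x)) cs"
proof -
  have "tl (cs @ [hd cs]) = map (cycle_of_list cs) cs"
    using cyclic_rotation[OF assms(1), of 1] assms(2) by (cases cs) auto
  then show ?thesis
    using assms(2) by (simp add: zip_append1 zip_map2 zip_same_conv_map)
qed

lemma potential_if_no_negative_cycle:
  fixes W :: "'a \<Rightarrow> 'a \<Rightarrow> real"
  assumes "finite A"
    and no_negative_cycle: "\<And>cs. cs \<noteq> [] \<Longrightarrow> distinct cs \<Longrightarrow> set cs \<subseteq> A \<Longrightarrow>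
      successively E (cs @ [hd cs]) \<Longrightarrow> 0 \<le> walk_weight W (cs @ [hd cs])"
  shows "\<exists>p. \<forall>x\<in>A. \<forall>y\<in>A. E x y \<longrightarrow> p x \<le> W x y + p y"
proof -
  define paths where
    "paths x = {xs. xs \<noteq> [] \<and> hd xs = x \<and> distinct xs \<and> set xs \<subseteq> A \<and> successively E xs}" for x
  define p where "p x = Min (walk_weight W ` paths x)" for x
  have finite_paths: "finite (paths x)" for x
    using finite_subset_distinct[OF \<open>finite A\<close>] by (rule rev_finite_subset) (auto simp: paths_def)
  have p_le: "p x \<le> walk_weight W xs" if "xs \<in> paths x" for x xs
    unfolding p_def using finite_paths that by simp
  have p_attained: "\<exists>xs\<in>paths x. p x = walk_weight W xs" if "x \<in> A" for x
  proof -
    have "[x] \<in> paths x" using that by (simp add: paths_def)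
    then show ?thesis unfolding p_def using finite_paths Min_in[of "walk_weight W ` paths x"] by fastforce
  qed
  show ?thesis
  proof (intro exI ballI impI)
    fix x y assume "x \<in> A" "y \<in> A" "E x y"
    obtain P where P: "P \<in> paths y" and p_y: "p y = walk_weight W P"
      using p_attained[OF \<open>y \<in> A\<close>] by blast
    then obtain Q where "P = y # Q" by (cases P) (auto simp: paths_def)
    then have weight_xP: "walk_weight W (x # P) = W x y + p y" using p_y by simp
    have walk_xP: "successively E (x # P)" using P \<open>E x y\<close> by (simp add: paths_def successively_Cons)
    show "p x \<le> W x y + p y"
    proof (cases "x \<in> set P")
      case False
      then have "x # P \<in> paths x" using P \<open>x \<in> A\<close> walk_xP by (simp add: paths_def)
      then show ?thesis using p_le weight_xP by fastforce
    next
      case True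
      \<comment> \<open>then \<open>x # P\<close> first runs around the cycle \<open>x # as\<close>, then along the simple path \<open>x # bs\<close>\<close>
      then obtain as bs where P_split: "P = as @ x # bs" by (meson split_list)
      have "successively E (x # as)" "successively E (x # bs)" "E (last (x # as)) x"
        using walk_xP successively_append_iff[of E "x # as" "x # bs"] unfolding P_split by auto
      then have "successively E ((x # as) @ [x])" "successively E (x # bs)"
        using successively_append_iff[of E "x # as" "[x]"] by auto
      moreover have "distinct (x # as)" "x # bs \<in> paths x"
        using P unfolding P_split by (auto simp: paths_def successively_append_iff)
      moreover have "set (x # as) \<subseteq> A" using P \<open>x \<in> A\<close> unfolding P_split by (auto simp: paths_def)
      ultimately have "0 \<le> walk_weight W ((x # as) @ [x])" "p x \<le> walk_weight W (x # bs)"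
        using no_negative_cycle[of "x # as"] p_le by auto
      moreover have "walk_weight W (x # P) = walk_weight W ((x # as) @ [x]) + walk_weight W (x # bs)"
        unfolding P_split using walk_weight_append[of W "x # as" x bs] by simp
      ultimately show ?thesis using weight_xP by linarith
    qed
  qed
qed

lemma min_matching_potential:
  fixes \<mu> :: "'i \<Rightarrow> 'a" and T :: "'i \<Rightarrow> 'a \<Rightarrow> bool" and K :: "'i \<Rightarrow> 'a \<Rightarrow> real"
  assumes "finite N" and \<mu>: "bij_betw \<mu> N A" "\<forall>i\<in>N. T i (\<mu> i)"
    and minimal: "\<And>\<mu>'. bij_betw \<mu>' N A \<Longrightarrow> \<forall>i\<in>N. T i (\<mu>' i) \<Longrightarrow>
      (\<Sum>i\<in>N. K i (\<mu> i)) \<le> (\<Sum>i\<in>N. K i (\<mu>' i))"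
  shows "\<exists>p. \<forall>i\<in>N. \<forall>a\<in>A. T i a \<longrightarrow> K i (\<mu> i) + p (\<mu> i) \<le> K i a + p a"
proof -
  define owner where "owner = inv_into N \<mu>"
  have owner_\<mu>: "owner (\<mu> i) = i" if "i \<in> N" for i
    unfolding owner_def using \<mu>(1) that by (rule bij_betw_inv_into_left)
  have owner: "owner x \<in> N" "\<mu> (owner x) = x" if "x \<in> A" for x
    unfolding owner_def using \<mu>(1) that
    by (auto simp: bij_betw_inv_into_right bij_betw_imp_surj_on inv_into_into)
  define E where "E x y = T (owner x) y" for x y
  define W where "W x y = K (owner x) y - K (owner x) x" for x y
  have "\<exists>p. \<forall>x\<in>A. \<forall>y\<in>A. E x y \<longrightarrow> p x \<le> W x y + p y"
  proof (rule potential_if_no_negative_cycle)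
    show "finite A" using \<mu>(1) \<open>finite N\<close> bij_betw_finite by blast
    fix cs assume cs: "cs \<noteq> []" "distinct cs" "set cs \<subseteq> A"
      and walk: "successively E (cs @ [hd cs])"
    define \<pi> where "\<pi> = cycle_of_list cs"
    have pairs: "zip (cs @ [hd cs]) (tl (cs @ [hd cs])) = map (\<lambda>x. (x, \<pi> x)) cs"
      unfolding \<pi>_def using cs(2,1) by (rule zip_closed_walk_cycle_of_list)
    have \<pi>_permutes: "\<pi> permutes A"
      unfolding \<pi>_def using cycle_permutes cs(3) by (rule permutes_subset)
    have \<pi>_edges: "E x (\<pi> x)" if "x \<in> A" for x
    proof (cases "x \<in> set cs")
      case True
      then show ?thesis using walk unfolding successively_conv_zip pairs by auto
    next
      case False
      then have "\<pi> x = x" unfolding \<pi>_def by (rule id_outside_supp)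
      then show ?thesis using \<mu>(2) owner[OF that] by (metis E_def)
    qed
    have "bij_betw (\<pi> \<circ> \<mu>) N A"
      using \<mu>(1) permutes_imp_bij[OF \<pi>_permutes] by (rule bij_betw_trans)
    moreover have "\<forall>i\<in>N. T i ((\<pi> \<circ> \<mu>) i)"
      using \<pi>_edges \<mu>(1) owner_\<mu> by (metis E_def bij_betw_apply comp_apply)
    ultimately have "0 \<le> (\<Sum>i\<in>N. K i (\<pi> (\<mu> i)) - K i (\<mu> i))"
      using minimal by (fastforce simp: sum_subtractf)
    also have "\<dots> = (\<Sum>x\<in>A. W x (\<pi> x))"
      using sum.reindex_bij_betw[OF \<mu>(1), of "\<lambda>x. W x (\<pi> x)"] owner_\<mu> by (simp add: W_def)
    also have "\<dots> = (\<Sum>x\<in>set cs. W x (\<pi> x))"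
      using \<open>finite A\<close> cs(3) by (intro sum.mono_neutral_right) (auto simp: W_def \<pi>_def id_outside_supp)
    also have "\<dots> = walk_weight W (cs @ [hd cs])"
      unfolding walk_weight_conv_zip pairs using cs(2) by (simp add: sum_list_distinct_conv_sum_set)
    finally show "0 \<le> walk_weight W (cs @ [hd cs])" .
  qed
  then obtain p where p: "\<And>x y. x \<in> A \<Longrightarrow> y \<in> A \<Longrightarrow> E x y \<Longrightarrow> p x \<le> W x y + p y"
    by blast
  show ?thesis
  proof (intro exI ballI impI)
    fix i a assume "i \<in> N" "a \<in> A" "T i a"
    then show "K i (\<mu> i) + p (\<mu> i) \<le> K i a + p a"
      using p[of "\<mu> i" a] \<mu>(1) owner_\<mu> by (simp add: E_def W_def bij_betw_apply)
  qed
qed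

lemma min_weight_pm_rent_direction:
  assumes "min_weight_pm v b rho N A r \<sigma> \<mu>" "finite N" "N \<noteq> {}" "\<forall>i\<in>N. rho i \<ge> 0"
  shows "\<exists>d. (\<forall>a. d a > 0) \<and> (\<Sum>a\<in>A. d a) = 1 \<and>
    (\<forall>i\<in>N. \<forall>a\<in>A. F_edge v b rho r \<sigma> i a \<longrightarrow>
       kappa b rho i (\<mu> i) r * d (\<mu> i) \<le> kappa b rho i a r * d a)"
proof -
  have \<mu>: "bij_betw \<mu> N A" "\<forall>i\<in>N. F_edge v b rho r \<sigma> i (\<mu> i)"
    using assms(1) unfolding min_weight_pm_def perfect_matching_F_def by auto
  obtain p where p: "\<forall>i\<in>N. \<forall>a\<in>A. F_edge v b rho r \<sigma> i a \<longrightarrow>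
      ln (kappa b rho i (\<mu> i) r) + p (\<mu> i) \<le> ln (kappa b rho i a r) + p a"
    using min_matching_potential[OF assms(2) \<mu>(1), of "F_edge v b rho r \<sigma>" "\<lambda>i a. ln (kappa b rho i a r)"]
      \<mu>(2) assms(1)
    unfolding min_weight_pm_def perfect_matching_F_def match_weight_def by blast
  define D where "D = (\<Sum>a\<in>A. exp (p a))"
  have "finite A" "A \<noteq> {}"
    using \<mu>(1) assms(2,3) bij_betw_finite bij_betw_empty2 by blast+
  then have "D > 0" unfolding D_def by (simp add: sum_pos)
  show ?thesis
  proof (intro exI[of _ "\<lambda>a. exp (p a) / D"] conjI allI ballI impI)
    show "exp (p a) / D > 0" for a using \<open>D > 0\<close> by simp
    show "(\<Sum>a\<in>A. exp (p a) / D) = 1" using \<open>D > 0\<close> by (simp add: D_def flip: sum_divide_distrib)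
    fix i a assume "i \<in> N" "a \<in> A" "F_edge v b rho r \<sigma> i a"
    moreover have "kappa b rho i c r > 0" for c
      using assms(4) \<open>i \<in> N\<close> by (simp add: kappa_def add_pos_nonneg)
    ultimately have "exp (ln (kappa b rho i (\<mu> i) r) + p (\<mu> i)) \<le> exp (ln (kappa b rho i a r) + p a)"
      using p by simp
    then have "kappa b rho i (\<mu> i) r * exp (p (\<mu> i)) \<le> kappa b rho i a r * exp (p a)"
      using \<open>\<And>c. kappa b rho i c r > 0\<close> by (simp add: exp_add)
    then show "kappa b rho i (\<mu> i) r * (exp (p (\<mu> i)) / D) \<le> kappa b rho i a r * (exp (p a) / D)"
      using \<open>D > 0\<close> by (metis divide_right_mono less_eq_real_def times_divide_eq_right)
  qed
qed

lemma eventually_no_envy_after_raise: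
  assumes "rho i \<ge> 0" "d c > 0" "d a \<ge> 0"
    and prefers: "util v b rho i (r a) a \<le> util v b rho i (r c) c"
    and rates: "util v b rho i (r a) a = util v b rho i (r c) c \<Longrightarrow>
      kappa b rho i c r * d c \<le> kappa b rho i a r * d a"
  shows "\<forall>\<^sub>F t in at_right 0.
    util v b rho i (r a + t * d a) a \<le> util v b rho i (r c + t * d c) c"
proof -
  have small: "\<forall>\<^sub>F t in at_right 0. t * d c < g" if "g > 0" for g
  proof -
    have "((\<lambda>t. t * d c) \<longlongrightarrow> 0) (at_right 0)" by (intro tendsto_eq_intros) auto
    then show ?thesis using that by (rule order_tendstoD)
  qed
  have loss_a: "util v b rho i (r a + t * d a) a \<le> util v b rho i (r a) a - kappa b rho i a r * (t * d a)"
    if "t > 0" for t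
    using util_raise_le_kappa[of rho i "t * d a"] assms(1,3) that by simp
  show ?thesis
  proof (cases "util v b rho i (r a) a = util v b rho i (r c) c")
    case True
    have "\<forall>\<^sub>F t in at_right 0. r c < b i \<longrightarrow> t * d c < b i - r c"
      using small[of "b i - r c"] by (cases "r c < b i") auto
    with eventually_at_right_less show ?thesis
    proof eventually_elim
      case (elim t)
      then have "util v b rho i (r c + t * d c) c = util v b rho i (r c) c - kappa b rho i c r * (t * d c)"
        using assms(2) by (intro util_raise_eq_kappa) auto
      moreover have "kappa b rho i c r * (t * d c) \<le> kappa b rho i a r * (t * d a)"
        using rates[OF True] \<open>t > 0\<close> mult_left_mono[of _ _ t] by (simp add: algebra_simps)
      ultimately show ?case using loss_a[of t] True \<open>t > 0\<close> by linarith
    qed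
  next
    case False
    then have "util v b rho i (r c) c - util v b rho i (r a) a > 0" using prefers by simp
    then have "\<forall>\<^sub>F t in at_right 0. t * d c < (util v b rho i (r c) c - util v b rho i (r a) a) / (1 + rho i)"
      using assms(1) by (intro small) simp
    with eventually_at_right_less show ?thesis
    proof eventually_elim
      case (elim t)
      then have "(1 + rho i) * (t * d c) < util v b rho i (r c) c - util v b rho i (r a) a"
        using assms(1) by (simp add: less_divide_eq mult.commute)
      moreover have "util v b rho i (r c + t * d c) c \<ge> util v b rho i (r c) c - (1 + rho i) * (t * d c)"
        using assms(1,2) elim by (intro util_raise_ge) auto
      moreover have "kappa b rho i a r * (t * d a) \<ge> 0"
        using assms(1,3) elim by (simp add: kappa_def)
      ultimately show ?case using loss_a[of t] elim by linarith
    qed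
  qed
qed

lemma eventually_envy_free_after_raise:
  assumes "envy_free v b rho N A m r \<sigma>" "perfect_matching_F v b rho N A r \<sigma> \<mu>" "finite N"
    and "\<forall>i\<in>N. rho i \<ge> 0" "\<forall>a. d a > 0"
    and rates: "\<forall>i\<in>N. \<forall>a\<in>A. F_edge v b rho r \<sigma> i a \<longrightarrow>
      kappa b rho i (\<mu> i) r * d (\<mu> i) \<le> kappa b rho i a r * d a"
  shows "\<forall>\<^sub>F t in at_right 0. \<forall>i\<in>N. \<forall>j\<in>N. util v b rho i (r (\<mu> j) + t * d (\<mu> j)) (\<mu> j)
    \<le> util v b rho i (r (\<mu> i) + t * d (\<mu> i)) (\<mu> i)"
proof -
  have \<sigma>: "bij_betw \<sigma> N A"
    and no_envy: "\<And>i j. i \<in> N \<Longrightarrow> j \<in> N \<Longrightarrow>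
      util v b rho i (r (\<sigma> j)) (\<sigma> j) \<le> util v b rho i (r (\<sigma> i)) (\<sigma> i)"
    using assms(1) unfolding envy_free_def allocation_def by auto
  have \<mu>: "bij_betw \<mu> N A" "\<And>i. i \<in> N \<Longrightarrow> F_edge v b rho r \<sigma> i (\<mu> i)"
    using assms(2) unfolding perfect_matching_F_def by auto
  have best: "util v b rho i (r a) a \<le> util v b rho i (r (\<sigma> i)) (\<sigma> i)" if "i \<in> N" "a \<in> A" for i a
    using no_envy[OF that(1)] that(2) bij_betw_imp_surj_on[OF \<sigma>] by auto
  have "\<forall>\<^sub>F t in at_right 0. util v b rho i (r (\<mu> j) + t * d (\<mu> j)) (\<mu> j)
    \<le> util v b rho i (r (\<mu> i) + t * d (\<mu> i)) (\<mu> i)" if "i \<in> N" "j \<in> N" for i j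
  proof (rule eventually_no_envy_after_raise)
    have "\<mu> j \<in> A" using \<mu>(1) that(2) by (rule bij_betw_apply)
    moreover have "util v b rho i (r (\<mu> i)) (\<mu> i) = util v b rho i (r (\<sigma> i)) (\<sigma> i)"
      using \<mu>(2)[OF that(1)] by (simp add: F_edge_def)
    ultimately show "util v b rho i (r (\<mu> j)) (\<mu> j) \<le> util v b rho i (r (\<mu> i)) (\<mu> i)"
      and "util v b rho i (r (\<mu> j)) (\<mu> j) = util v b rho i (r (\<mu> i)) (\<mu> i) \<Longrightarrow>
        kappa b rho i (\<mu> i) r * d (\<mu> i) \<le> kappa b rho i (\<mu> j) r * d (\<mu> j)"
      using best that rates by (auto simp: F_edge_def)
  qed (use assms(4,5) that in \<open>auto simp: less_imp_le\<close>)
  then show ?thesis using \<open>finite N\<close> by (simp add: eventually_ball_finite)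
qed

theorem lemma5:
  fixes Rhos :: "real set" and N :: "'i set" and A :: "'a set"
    and v :: "'i \<Rightarrow> 'a \<Rightarrow> real" and b rho :: "'i \<Rightarrow> real"
    and m :: real and r :: "'a \<Rightarrow> real" and \<sigma> \<mu> :: "'i \<Rightarrow> 'a"
  assumes "finite Rhos" and "0 \<in> Rhos" and "\<forall>x\<in>Rhos. x \<ge> 0"
    and "finite N" and "N \<noteq> {}" and "card A = card N"
    and "in_B Rhos N b rho"
    and "envy_free v b rho N A m r \<sigma>"
    and "min_weight_pm v b rho N A r \<sigma> \<mu>"
  shows "\<exists>\<epsilon>>0. \<forall>\<delta>. 0 < \<delta> \<and> \<delta> \<le> \<epsilon> \<longrightarrow>
           (\<exists>r'. envy_free v b rho N A (m + \<delta>) r' \<mu> \<and> (\<forall>a\<in>A. r' a > r a))"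
proof -
  have rho: "\<forall>i\<in>N. rho i \<ge> 0" using assms(3,7) by (auto simp: in_B_def)
  have \<mu>: "perfect_matching_F v b rho N A r \<sigma> \<mu>" using assms(9) by (simp add: min_weight_pm_def)
  obtain d where d: "\<forall>a. d a > 0" "(\<Sum>a\<in>A. d a) = 1"
    "\<forall>i\<in>N. \<forall>a\<in>A. F_edge v b rho r \<sigma> i a \<longrightarrow>
       kappa b rho i (\<mu> i) r * d (\<mu> i) \<le> kappa b rho i a r * d a"
    using min_weight_pm_rent_direction[OF assms(9,4,5) rho] by blast
  obtain e where "e > 0" and no_envy: "\<And>t. 0 < t \<Longrightarrow> t < e \<Longrightarrow> \<forall>i\<in>N. \<forall>j\<in>N.
      util v b rho i (r (\<mu> j) + t * d (\<mu> j)) (\<mu> j) \<le> util v b rho i (r (\<mu> i) + t * d (\<mu> i)) (\<mu> i)"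
    using eventually_envy_free_after_raise[OF assms(8) \<mu> assms(4) rho d(1,3)]
    unfolding eventually_at_right_field by auto
  show ?thesis
  proof (intro exI[of _ "e / 2"] conjI allI impI)
    fix \<delta> assume "0 < \<delta> \<and> \<delta> \<le> e / 2"
    moreover have "(\<Sum>a\<in>A. r a + \<delta> * d a) = m + \<delta>"
      using assms(8) d(2) by (simp add: envy_free_def allocation_def sum.distrib flip: sum_distrib_left)
    ultimately show "\<exists>r'. envy_free v b rho N A (m + \<delta>) r' \<mu> \<and> (\<forall>a\<in>A. r' a > r a)"
      using no_envy[of \<delta>] \<open>e > 0\<close> \<mu> d(1)
      by (intro exI[of _ "\<lambda>a. r a + \<delta> * d a"]) (auto simp: envy_free_def allocation_def perfect_matching_F_def)
  qed (use \<open>e > 0\<close> in simp)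
qed

end
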